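(* Let $Z\subset C'\subset P$ be subschemes of the plane $H=\{x=0\}$, where $Z$ is a nonempty zero-dimensional scheme, $I_{C'}=(x,p)$ and $I_P=(x,ph)$ with $p,h\in S$ nonzero homogeneous, $\delta=\deg p$ and $d=2\delta+\deg h$. Let $J\subseteq R$ be a homogeneous ideal admitting the expected residual sequence, i.e. fitting into an exact sequence $$0\to I_{C'}(-1)\xrightarrow{\ \cdot x\ } J\to ph\,I_{Z,H}\to0$$ (equivalently, $(J+xR)/xR=ph\,I_{Z,H}$ and $J:(x)=(x,p)$). Then $J$ is saturated, $J=I_X$ for a one-dimensional closed subscheme $X\subset\mathbb P^3$ of degree $d$ and arithmetic genus $$\binom{d-\delta-1}{2}+\binom{\delta-1}{2}+\delta-\deg Z-1.$$
   Context: $K$ is an algebraically closed field, $R=K[x,y,z,t]$, $S=K[y,z,t]$ identified with $R/xR$, and $H\subset\mathbb P^3_K$ is the plane with ideal $xR$. $I_X$ denotes the saturated homogeneous ideal of a closed subscheme $X$, and $I_{Z,H}\subset S$ is the saturated homogeneous ideal of $Z$ as a subscheme of $H\cong\operatorname{Proj}(S)$. *)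

theory Defs
  imports "HOL-Library.Poly_Mapping" "HOL-Computational_Algebra.Polynomial"
begin

datatype var = VX | VY | VZ | VT

text \<open>Multivariate polynomials over 'k in the variables x,y,z,t:
  finitely supported maps from monomials (exponent vectors) to coefficients.\<close>
type_synonym 'k mpoly = "(var \<Rightarrow>\<^sub>0 nat) \<Rightarrow>\<^sub>0 'k"

definition alg_closed :: "'k::field itself \<Rightarrow> bool" where
  "alg_closed _ \<longleftrightarrow> (\<forall>q :: 'k poly. Polynomial.degree q > 0 \<longrightarrow> (\<exists>a. poly q a = 0))"

definition mdeg :: "(var \<Rightarrow>\<^sub>0 nat) \<Rightarrow> nat" where
  "mdeg m = (\<Sum>v\<in>Poly_Mapping.keys m. Poly_Mapping.lookup m v)"

definition var_poly :: "var \<Rightarrow> 'k::comm_ring_1 mpoly" where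
  "var_poly v = Poly_Mapping.single (Poly_Mapping.single v 1) 1"

definition const_poly :: "'k::comm_ring_1 \<Rightarrow> 'k mpoly" where
  "const_poly c = Poly_Mapping.single 0 c"

definition vars :: "'k::zero mpoly \<Rightarrow> var set" where
  "vars f = \<Union> (Poly_Mapping.keys ` Poly_Mapping.keys f)"

text \<open>Polynomials involving only the variables in V (V = UNIV: the ring R;
  V = {y,z,t}: the ring S = K[y,z,t]).\<close>
definition polys :: "var set \<Rightarrow> 'k::zero mpoly set" where
  "polys V = {f. vars f \<subseteq> V}"

definition homogeneous_of :: "nat \<Rightarrow> 'k::zero mpoly \<Rightarrow> bool" where
  "homogeneous_of n f \<longleftrightarrow> (\<forall>m\<in>Poly_Mapping.keys f. mdeg m = n)"

definition homogeneous :: "'k::zero mpoly \<Rightarrow> bool" where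
  "homogeneous f \<longleftrightarrow> (\<exists>n. homogeneous_of n f)"

definition hcomp :: "nat \<Rightarrow> 'k::zero mpoly \<Rightarrow> 'k mpoly" where
  "hcomp n f = Poly_Mapping.mapp (\<lambda>m c. if mdeg m = n then c else 0) f"

definition is_ideal_in :: "var set \<Rightarrow> 'k::comm_ring_1 mpoly set \<Rightarrow> bool" where
  "is_ideal_in V I \<longleftrightarrow> I \<subseteq> polys V \<and> 0 \<in> I \<and> (\<forall>a\<in>I. \<forall>b\<in>I. a + b \<in> I)
     \<and> (\<forall>a\<in>I. \<forall>r\<in>polys V. r * a \<in> I)"

definition homogeneous_ideal_in :: "var set \<Rightarrow> 'k::comm_ring_1 mpoly set \<Rightarrow> bool" where
  "homogeneous_ideal_in V I \<longleftrightarrow> is_ideal_in V I \<and> (\<forall>f\<in>I. \<forall>n. hcomp n f \<in> I)"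

text \<open>Saturation with respect to the irrelevant ideal generated by the variables in V:
  I : m^\<infinity> = I.\<close>
definition saturated_in :: "var set \<Rightarrow> 'k::comm_ring_1 mpoly set \<Rightarrow> bool" where
  "saturated_in V I \<longleftrightarrow>
     (\<forall>f\<in>polys V. (\<exists>k. \<forall>v\<in>V. var_poly v ^ k * f \<in> I) \<longrightarrow> f \<in> I)"

definition forms :: "var set \<Rightarrow> nat \<Rightarrow> 'k::zero mpoly set" where
  "forms V n = {f \<in> polys V. homogeneous_of n f}"

text \<open>Hilbert function of (K[V]/I) in degree n: the K-dimension of the degree-n part of
  the quotient, i.e. the least size of a set of degree-n forms spanning
  K[V]_n modulo I.\<close>
definition hilbert_fun :: "var set \<Rightarrow> 'k::field mpoly set \<Rightarrow> nat \<Rightarrow> nat" where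
  "hilbert_fun V I n = (LEAST k. \<exists>B. finite B \<and> card B = k \<and> B \<subseteq> forms V n \<and>
      (\<forall>f\<in>forms V n. \<exists>c. f - (\<Sum>b\<in>B. const_poly (c b) * b) \<in> I))"

end

theory Submission
  imports Defs
begin

text \<open>Write x for the variable VX and \<pi> for reduction modulo x. In every degree, \<pi> maps
  J onto the corresponding graded piece of ph I_Z, with kernel x (J : x) = x (x,p); likewise
  (x,p) maps onto pS with kernel xR. Rank-nullity degree by degree turns these two exact
  sequences into a closed formula for the Hilbert function of R/J in terms of
  dim S_k = (k+1)(k+2)/2 and the Hilbert function of S/I_Z, which is eventually deg Z; the
  result is d n + 1 - p_a.

  For saturatedness, let x_v^k f \<in> J for every variable v. Reducing modulo x, the form \<pi> f
  becomes divisible by ph, since y^k and z^k have no common factor, and the cofactor lies in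
  I_Z because I_Z is saturated. Subtracting a suitable element of J leaves x w with
  y^k w, z^k w \<in> (x,p), and the same coprimality argument gives w \<in> (x,p), hence f \<in> J.\<close>

text \<open>Poly_Mapping provides ring_no_zero_divisors for polynomials whose exponent vectors are
  ordered linearly; any linear order on the variables will do.\<close>

instantiation var :: linorder
begin

fun var_index :: "var \<Rightarrow> nat" where
  "var_index VX = 0" | "var_index VY = 1" | "var_index VZ = 2" | "var_index VT = 3"

definition less_eq_var :: "var \<Rightarrow> var \<Rightarrow> bool" where
  "less_eq_var a b \<longleftrightarrow> var_index a \<le> var_index b"

definition less_var :: "var \<Rightarrow> var \<Rightarrow> bool" where
  "less_var a b \<longleftrightarrow> var_index a < var_index b"

instance
proof
  have inj: "var_index a = var_index b \<Longrightarrow> a = b" for a b by (cases a; cases b; simp)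
  fix x y z :: var
  show "(x < y) = (x \<le> y \<and> \<not> y \<le> x)" by (auto simp: less_eq_var_def less_var_def)
  show "x \<le> x" by (simp add: less_eq_var_def)
  show "x \<le> y \<Longrightarrow> y \<le> z \<Longrightarrow> x \<le> z" by (simp add: less_eq_var_def)
  show "x \<le> y \<Longrightarrow> y \<le> x \<Longrightarrow> x = y" using inj by (simp add: less_eq_var_def)
  show "x \<le> y \<or> y \<le> x" by (auto simp add: less_eq_var_def)
qed

end

lemma UNIV_var: "(UNIV :: var set) = {VX, VY, VZ, VT}"
  using var.exhaust by auto

instance var :: finite
  by standard (simp add: UNIV_var)

abbreviation S_vars :: "var set" where
  "S_vars \<equiv> {VY, VZ, VT}"

lemma UNIV_minus_VX: "UNIV - {VX} = S_vars"
  using UNIV_var by auto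

abbreviation lookup :: "('a \<Rightarrow>\<^sub>0 'b::zero) \<Rightarrow> 'a \<Rightarrow> 'b" where
  "lookup \<equiv> Poly_Mapping.lookup"

abbreviation keys :: "('a \<Rightarrow>\<^sub>0 'b::zero) \<Rightarrow> 'a set" where
  "keys \<equiv> Poly_Mapping.keys"

definition var_mon :: "var \<Rightarrow> (var \<Rightarrow>\<^sub>0 nat)" where
  "var_mon v = Poly_Mapping.single v 1"

lemma lookup_var_mon: "lookup (var_mon v) w = (if v = w then 1 else 0)"
  by (simp add: var_mon_def lookup_single when_def)

lemma var_poly_eq_single: "var_poly v = Poly_Mapping.single (var_mon v) 1"
  by (simp add: var_poly_def var_mon_def)

lemma var_mon_split: "lookup m v \<noteq> 0 \<Longrightarrow> m = var_mon v + (m - var_mon v)"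
  by (rule poly_mapping_eqI) (auto simp: lookup_add lookup_minus lookup_var_mon)

lemma mdeg_eq_sum_UNIV: "mdeg m = (\<Sum>v\<in>UNIV. lookup m v)"
  unfolding mdeg_def by (rule sum.mono_neutral_left) (auto simp: in_keys_iff)

lemma mdeg_add [simp]: "mdeg (a + b) = mdeg a + mdeg b"
  unfolding mdeg_eq_sum_UNIV by (simp add: lookup_add sum.distrib)

lemma mdeg_zero [simp]: "mdeg 0 = 0"
  unfolding mdeg_def by simp

lemma mdeg_var_mon [simp]: "mdeg (var_mon v) = 1"
  unfolding mdeg_def var_mon_def by simp

lemma mdeg_eq_0_iff: "mdeg m = 0 \<longleftrightarrow> m = 0"
proof
  assume "mdeg m = 0"
  then have "\<forall>v. lookup m v = 0" unfolding mdeg_eq_sum_UNIV by simp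
  then show "m = 0" by (intro poly_mapping_eqI) simp
qed simp

lemma mdeg_minus_var_mon: "lookup m v \<noteq> 0 \<Longrightarrow> mdeg (m - var_mon v) = mdeg m - 1"
  by (metis var_mon_split mdeg_add mdeg_var_mon add_diff_cancel_left')

lemma mdeg_pos: "lookup m v \<noteq> 0 \<Longrightarrow> mdeg m \<noteq> 0"
  by (metis mdeg_eq_0_iff lookup_zero)

definition mon_in :: "var set \<Rightarrow> (var \<Rightarrow>\<^sub>0 nat) \<Rightarrow> bool" where
  "mon_in V m \<longleftrightarrow> (\<forall>w. w \<notin> V \<longrightarrow> lookup m w = 0)"

lemma mon_in_keys: "mon_in V m \<longleftrightarrow> keys m \<subseteq> V"
  unfolding mon_in_def by (auto simp: in_keys_iff)

lemma mon_in_add: "mon_in V (a + b) \<longleftrightarrow> mon_in V a \<and> mon_in V b"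
  unfolding mon_in_def by (auto simp: lookup_add)

lemma mon_in_minus_var_mon: "v \<in> V \<Longrightarrow> mon_in V (m - var_mon v) \<longleftrightarrow> mon_in V m"
  unfolding mon_in_def by (auto simp: lookup_minus lookup_var_mon)

definition supp_within :: "((var \<Rightarrow>\<^sub>0 nat) \<Rightarrow> bool) \<Rightarrow> 'k::zero mpoly \<Rightarrow> bool" where
  "supp_within P f \<longleftrightarrow> (\<forall>m. lookup f m \<noteq> 0 \<longrightarrow> P m)"

lemma polys_iff_supp_within: "f \<in> polys V \<longleftrightarrow> supp_within (mon_in V) f"
proof -
  have "f \<in> polys V \<longleftrightarrow> (\<forall>m\<in>keys f. keys m \<subseteq> V)"
    unfolding polys_def vars_def by blast
  also have "\<dots> \<longleftrightarrow> supp_within (mon_in V) f"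
    unfolding supp_within_def mon_in_keys by (simp only: Ball_def in_keys_iff)
  finally show ?thesis .
qed

lemma homogeneous_of_iff_supp_within: "homogeneous_of n f \<longleftrightarrow> supp_within (\<lambda>m. mdeg m = n) f"
  unfolding homogeneous_of_def supp_within_def by (auto simp: in_keys_iff)

lemma forms_iff_supp_within: "f \<in> forms V n \<longleftrightarrow> supp_within (\<lambda>m. mon_in V m \<and> mdeg m = n) f"
  unfolding forms_def polys_iff_supp_within homogeneous_of_iff_supp_within supp_within_def by auto

lemma supp_within_mono: "supp_within P f \<Longrightarrow> (\<And>m. P m \<Longrightarrow> Q m) \<Longrightarrow> supp_within Q f"
  unfolding supp_within_def by auto

lemma supp_within_add:
  "supp_within P f \<Longrightarrow> supp_within P g \<Longrightarrow> supp_within P (f + g :: 'k::comm_monoid_add mpoly)"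
  unfolding supp_within_def lookup_add by (metis add.left_neutral)

lemma supp_within_const_mult:
  "supp_within P f \<Longrightarrow> supp_within P (const_poly c * f :: 'k::comm_ring_1 mpoly)"
  unfolding supp_within_def const_poly_def mult_map_scale_conv_mult[symmetric]
  by (simp add: Poly_Mapping.map.rep_eq when_def)

lemma supp_within_mult:
  assumes "supp_within P f" "supp_within Q (g :: 'k::comm_ring_1 mpoly)"
  shows "supp_within (\<lambda>m. \<exists>a b. m = a + b \<and> P a \<and> Q b) (f * g)"
  unfolding supp_within_def
proof (intro allI impI)
  fix m assume "lookup (f * g) m \<noteq> 0"
  then have "m \<in> keys (f * g)" by (simp add: in_keys_iff)
  then obtain a b where "m = a + b" "a \<in> keys f" "b \<in> keys g"
    using keys_mult by blast
  then show "\<exists>a b. m = a + b \<and> P a \<and> Q b"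
    using assms unfolding supp_within_def by (auto simp: in_keys_iff)
qed

lemma supp_within_single: "c = 0 \<or> P m \<Longrightarrow> supp_within P (Poly_Mapping.single m c)"
  unfolding supp_within_def by (auto simp: lookup_single when_def)

lemma polys_UNIV [simp]: "polys UNIV = UNIV"
  unfolding polys_def by simp

lemma polys_add: "f \<in> polys V \<Longrightarrow> g \<in> polys V \<Longrightarrow> f + g \<in> polys V"
  for f g :: "'k::comm_monoid_add mpoly"
  by (simp add: polys_iff_supp_within supp_within_add)

lemma polys_mult:
  "f \<in> polys V \<Longrightarrow> g \<in> polys V \<Longrightarrow> f * g \<in> polys V"
  for f g :: "'k::comm_ring_1 mpoly"
  unfolding polys_iff_supp_within
  by (auto dest: supp_within_mult intro: supp_within_mono simp: mon_in_add)

lemma const_poly_in_polys: "(const_poly c :: 'k::comm_ring_1 mpoly) \<in> polys V"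
  unfolding polys_iff_supp_within const_poly_def
  by (rule supp_within_single) (simp add: mon_in_def)

lemma const_poly_in_forms_0: "(const_poly c :: 'k::comm_ring_1 mpoly) \<in> forms V 0"
  unfolding forms_iff_supp_within const_poly_def
  by (rule supp_within_single) (simp add: mon_in_def)

lemma zero_in_polys [simp]: "0 \<in> polys V"
  by (simp add: polys_iff_supp_within supp_within_def)

lemma zero_in_forms [simp]: "0 \<in> forms V n"
  by (simp add: forms_iff_supp_within supp_within_def)

lemma forms_add: "f \<in> forms V n \<Longrightarrow> g \<in> forms V n \<Longrightarrow> f + g \<in> forms V n"
  for f g :: "'k::comm_monoid_add mpoly"
  by (simp add: forms_iff_supp_within supp_within_add)

lemma forms_const_mult: "f \<in> forms V n \<Longrightarrow> const_poly c * f \<in> forms V n"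
  for f :: "'k::comm_ring_1 mpoly"
  by (simp add: forms_iff_supp_within supp_within_const_mult)

lemma forms_mono: "V \<subseteq> W \<Longrightarrow> f \<in> forms V n \<Longrightarrow> f \<in> forms W n"
  unfolding forms_iff_supp_within by (auto elim!: supp_within_mono simp: mon_in_def)

lemma homogeneous_of_mult:
  "homogeneous_of a f \<Longrightarrow> homogeneous_of b g \<Longrightarrow> homogeneous_of (a + b) (f * g)"
  for f g :: "'k::comm_ring_1 mpoly"
  unfolding homogeneous_of_iff_supp_within by (auto dest: supp_within_mult intro: supp_within_mono)

lemma forms_mult: "f \<in> forms V a \<Longrightarrow> g \<in> forms V b \<Longrightarrow> f * g \<in> forms V (a + b)"
  for f g :: "'k::comm_ring_1 mpoly"
  unfolding forms_def by (auto simp: polys_mult homogeneous_of_mult)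

lemma ideal_zero: "is_ideal_in V I \<Longrightarrow> 0 \<in> I"
  unfolding is_ideal_in_def by blast

lemma ideal_add: "is_ideal_in V I \<Longrightarrow> a \<in> I \<Longrightarrow> b \<in> I \<Longrightarrow> a + b \<in> I"
  unfolding is_ideal_in_def by blast

lemma ideal_mult: "is_ideal_in V I \<Longrightarrow> a \<in> I \<Longrightarrow> r \<in> polys V \<Longrightarrow> r * a \<in> I"
  unfolding is_ideal_in_def by blast

subsection \<open>Splitting off a variable\<close>

definition subst_zero :: "var \<Rightarrow> 'k::zero mpoly \<Rightarrow> 'k mpoly" where
  "subst_zero v f = Poly_Mapping.mapp (\<lambda>m c. if lookup m v = 0 then c else 0) f"

definition var_quot :: "var \<Rightarrow> 'k::zero mpoly \<Rightarrow> 'k mpoly" where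
  "var_quot v f = Abs_poly_mapping (\<lambda>m. lookup f (m + var_mon v))"

lemma lookup_subst_zero: "lookup (subst_zero v f) m = (if lookup m v = 0 then lookup f m else 0)"
  unfolding subst_zero_def lookup_mapp by (auto simp: when_def in_keys_iff)

lemma lookup_var_quot: "lookup (var_quot v f) m = lookup f (m + var_mon v)"
proof -
  have "finite ((\<lambda>m. m + var_mon v) -` {k. lookup f k \<noteq> 0})"
    by (rule finite_vimageI) (auto simp: inj_def)
  then have "finite {m. lookup f (m + var_mon v) \<noteq> 0}" by (simp add: vimage_def)
  then show ?thesis unfolding var_quot_def by simp
qed

lemma lookup_single_mult:
  "lookup (Poly_Mapping.single k c * f) m =
     (if \<exists>q. m = k + q then c * lookup f (m - k) else (0::'k::comm_semiring_1))"
  for k :: "var \<Rightarrow>\<^sub>0 nat"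
proof -
  have "lookup (Poly_Mapping.single k c * f) m = c * Sum_any (\<lambda>r. lookup f r when m = k + r)"
    by (simp add: lookup_mult lookup_single when_mult Sum_any_when_equal')
  also have "Sum_any (\<lambda>r. lookup f r when m = k + r) = (if \<exists>q. m = k + q then lookup f (m - k) else 0)"
  proof (cases "\<exists>q. m = k + q")
    case True
    then obtain q where q: "m = k + q" by blast
    then have "(\<lambda>r. lookup f r when m = k + r) = (\<lambda>r. lookup f r when r = q)"
      by (auto simp: when_def)
    then show ?thesis using q by simp
  next
    case False
    then have "(\<lambda>r. lookup f r when m = k + r) = (\<lambda>r. 0)" by (auto simp: when_def)
    then show ?thesis using False by simp
  qed
  finally show ?thesis by simp
qed

lemma lookup_var_poly_mult:
  "lookup (var_poly v * f) m =
     (if lookup m v = 0 then 0 else lookup (f :: 'k::comm_ring_1 mpoly) (m - var_mon v))"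
proof -
  have "(\<exists>q. m = var_mon v + q) \<longleftrightarrow> lookup m v \<noteq> 0"
    using var_mon_split by (auto simp: lookup_add lookup_var_mon)
  then show ?thesis unfolding var_poly_eq_single lookup_single_mult by simp
qed

lemma lookup_var_poly_mult_add [simp]:
  "lookup (var_poly v * f) (m + var_mon v) = lookup (f :: 'k::comm_ring_1 mpoly) m"
proof -
  have "lookup (m + var_mon v) v \<noteq> 0" by (simp add: lookup_add lookup_var_mon)
  then show ?thesis by (simp add: lookup_var_poly_mult)
qed

lemma subst_zero_var_quot_decomp:
  "f = subst_zero v f + var_poly v * var_quot v (f :: 'k::comm_ring_1 mpoly)"
proof (rule poly_mapping_eqI)
  fix m
  show "lookup f m = lookup (subst_zero v f + var_poly v * var_quot v f) m"
  proof (cases "lookup m v = 0")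
    case True
    then show ?thesis by (simp add: lookup_add lookup_subst_zero lookup_var_poly_mult)
  next
    case False
    then have "m - var_mon v + var_mon v = m" using var_mon_split by (metis add.commute)
    then show ?thesis
      using False by (simp add: lookup_add lookup_subst_zero lookup_var_poly_mult lookup_var_quot)
  qed
qed

lemma subst_zero_add: "subst_zero v (f + g) = subst_zero v f + subst_zero v (g :: 'k::comm_monoid_add mpoly)"
  by (rule poly_mapping_eqI) (simp add: lookup_subst_zero lookup_add)

lemma subst_zero_0 [simp]: "subst_zero v 0 = 0"
  by (rule poly_mapping_eqI) (simp add: lookup_subst_zero)

lemma subst_zero_const_mult:
  "subst_zero v (const_poly c * f) = const_poly c * subst_zero v (f :: 'k::comm_ring_1 mpoly)"
  by (rule poly_mapping_eqI)
    (simp add: lookup_subst_zero const_poly_def mult_map_scale_conv_mult[symmetric] Poly_Mapping.map.rep_eq)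

lemma subst_zero_var_poly_mult [simp]: "subst_zero v (var_poly v * f) = (0 :: 'k::comm_ring_1 mpoly)"
  by (rule poly_mapping_eqI) (simp add: lookup_subst_zero lookup_var_poly_mult)

lemma subst_zero_idem: "supp_within (\<lambda>m. lookup m v = 0) f \<Longrightarrow> subst_zero v f = f"
  unfolding supp_within_def by (rule poly_mapping_eqI) (metis lookup_subst_zero)

lemma subst_zero_subst_zero: "subst_zero v (subst_zero v f) = subst_zero v f"
  by (rule poly_mapping_eqI) (simp add: lookup_subst_zero)

lemma supp_within_subst_zero: "supp_within (\<lambda>m. lookup m v = 0) (subst_zero v f)"
  unfolding supp_within_def by (simp add: lookup_subst_zero)

lemma subst_zero_polys: "f \<in> polys V \<Longrightarrow> v \<notin> V \<Longrightarrow> subst_zero v f = f"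
  unfolding polys_iff_supp_within by (auto intro: subst_zero_idem elim!: supp_within_mono simp: mon_in_def)

lemma subst_zero_in_polys: "subst_zero v f \<in> polys (UNIV - {v})"
  unfolding polys_iff_supp_within
  by (rule supp_within_mono[OF supp_within_subst_zero]) (simp add: mon_in_def)

lemma var_quot_var_poly_mult [simp]: "var_quot v (var_poly v * f) = (f :: 'k::comm_ring_1 mpoly)"
  by (rule poly_mapping_eqI) (simp only: lookup_var_quot lookup_var_poly_mult_add)

lemma var_poly_nonzero [simp]: "var_poly v \<noteq> (0 :: 'k::comm_ring_1 mpoly)"
  by (metis var_quot_var_poly_mult mult_zero_right zero_neq_one mult_1_right)

lemma subst_zero_mult:
  "subst_zero v (f * g) = subst_zero v f * subst_zero v (g :: 'k::comm_ring_1 mpoly)"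
proof -
  have "supp_within (\<lambda>m. lookup m v = 0) (subst_zero v f * subst_zero v g)"
    using supp_within_mult[OF supp_within_subst_zero supp_within_subst_zero]
    by (rule supp_within_mono) (auto simp: lookup_add)
  then have "subst_zero v (subst_zero v f * subst_zero v g) = subst_zero v f * subst_zero v g"
    by (rule subst_zero_idem)
  moreover have "f * g = subst_zero v f * subst_zero v g + var_poly v *
      (var_quot v f * subst_zero v g + subst_zero v f * var_quot v g + var_poly v * var_quot v f * var_quot v g)"
    by (subst subst_zero_var_quot_decomp[of f v], subst subst_zero_var_quot_decomp[of g v])
      (simp add: algebra_simps)
  ultimately show ?thesis by (metis subst_zero_add subst_zero_var_poly_mult add_0_right)
qed

lemma subst_zero_var_poly_other: "w \<noteq> v \<Longrightarrow> subst_zero v (var_poly w) = (var_poly w :: 'k::comm_ring_1 mpoly)"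
  by (intro subst_zero_idem) (simp add: supp_within_def var_poly_eq_single lookup_single when_def lookup_var_mon)

lemma subst_zero_var_poly [simp]: "subst_zero v (var_poly v) = (0 :: 'k::comm_ring_1 mpoly)"
  using subst_zero_var_poly_mult[of v 1] by simp

lemma subst_zero_power: "subst_zero v (f ^ k) = subst_zero v f ^ k" for f :: "'k::comm_ring_1 mpoly"
proof (induction k)
  case 0
  have "subst_zero v (1 :: 'k mpoly) = 1"
    by (intro subst_zero_idem) (simp add: supp_within_def lookup_one when_def)
  then show ?case by simp
qed (simp add: subst_zero_mult)

lemma subst_zero_var_power_mult:
  "w \<noteq> v \<Longrightarrow> subst_zero v (var_poly w ^ k * f) = var_poly w ^ k * subst_zero v (f :: 'k::comm_ring_1 mpoly)"
  by (simp add: subst_zero_mult subst_zero_power subst_zero_var_poly_other)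

lemma var_poly_mult_in_forms:
  fixes f :: "'k::comm_ring_1 mpoly"
  assumes v: "v \<in> V" and f: "f \<in> forms V n"
  shows "var_poly v * f \<in> forms V (Suc n)"
  unfolding forms_iff_supp_within supp_within_def
proof (intro allI impI)
  fix m assume "lookup (var_poly v * f) m \<noteq> 0"
  then have m: "lookup m v \<noteq> 0" "lookup f (m - var_mon v) \<noteq> 0"
    by (auto simp: lookup_var_poly_mult split: if_splits)
  then show "mon_in V m \<and> mdeg m = Suc n"
    using f mdeg_minus_var_mon[OF m(1)] mdeg_pos[OF m(1)] mon_in_minus_var_mon[OF v]
    unfolding forms_iff_supp_within supp_within_def by force
qed

lemma subst_zero_in_forms: "f \<in> forms V n \<Longrightarrow> subst_zero v f \<in> forms (V - {v}) n"
  unfolding forms_iff_supp_within supp_within_def by (auto simp: lookup_subst_zero mon_in_def)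

lemma var_quot_in_forms: "f \<in> forms V (Suc n) \<Longrightarrow> var_quot v f \<in> forms V n"
  unfolding forms_iff_supp_within supp_within_def by (auto simp: lookup_var_quot mon_in_add)

lemma subst_zero_image_forms: "subst_zero v ` forms V n = forms (V - {v}) n"
proof
  show "subst_zero v ` forms V n \<subseteq> forms (V - {v}) n"
    using subst_zero_in_forms by blast
  show "forms (V - {v}) n \<subseteq> subst_zero v ` forms V n"
  proof
    fix g assume g: "g \<in> forms (V - {v}) n"
    then have "subst_zero v g = g" using subst_zero_polys forms_def by blast
    moreover have "g \<in> forms V n" using forms_mono[OF _ g] by blast
    ultimately show "g \<in> subst_zero v ` forms V n" by (metis image_eqI)
  qed
qed

lemma subst_zero_kernel_forms:
  assumes "v \<in> V"
  shows "{f \<in> forms V (Suc n). subst_zero v f = 0} = (\<lambda>f. var_poly v * f) ` (forms V n :: 'k::comm_ring_1 mpoly set)"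
proof
  show "{f \<in> forms V (Suc n). subst_zero v f = 0} \<subseteq> (\<lambda>f. var_poly v * f) ` (forms V n :: 'k mpoly set)"
  proof
    fix f :: "'k mpoly" assume "f \<in> {f \<in> forms V (Suc n). subst_zero v f = 0}"
    then have f: "f \<in> forms V (Suc n)" "subst_zero v f = 0" by auto
    then have "f = var_poly v * var_quot v f" using subst_zero_var_quot_decomp[of f v] by simp
    then show "f \<in> (\<lambda>f. var_poly v * f) ` forms V n" using var_quot_in_forms[OF f(1)] by blast
  qed
  show "(\<lambda>f. var_poly v * f) ` (forms V n :: 'k mpoly set) \<subseteq> {f \<in> forms V (Suc n). subst_zero v f = 0}"
    using var_poly_mult_in_forms[OF assms] by auto
qed

lemma lookup_hcomp: "lookup (hcomp n f) m = (if mdeg m = n then lookup f m else 0)"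
  unfolding hcomp_def lookup_mapp by (auto simp: when_def in_keys_iff)

lemma hcomp_sum: "hcomp n (sum g A) = (\<Sum>i\<in>A. hcomp n (g i :: 'k::comm_monoid_add mpoly))"
  by (rule poly_mapping_eqI) (simp add: lookup_hcomp lookup_sum)

lemma hcomp_subst_zero: "hcomp n (subst_zero v f) = subst_zero v (hcomp n f)"
  by (rule poly_mapping_eqI) (simp add: lookup_hcomp lookup_subst_zero)

lemma hcomp_homogeneous: "homogeneous_of k f \<Longrightarrow> hcomp n f = (if k = n then f else 0)"
  unfolding homogeneous_of_iff_supp_within supp_within_def
  by (intro poly_mapping_eqI) (auto simp: lookup_hcomp)

lemma hcomp_in_forms: "f \<in> polys V \<Longrightarrow> hcomp n f \<in> forms V n"
  unfolding forms_iff_supp_within polys_iff_supp_within supp_within_def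
  by (auto simp: lookup_hcomp split: if_splits)

lemma homogeneous_of_hcomp: "homogeneous_of n (hcomp n f)"
  unfolding homogeneous_of_iff_supp_within supp_within_def by (auto simp: lookup_hcomp split: if_splits)

lemma sum_hcomp: "(\<Sum>k\<in>mdeg ` keys f. hcomp k f) = (f :: 'k::comm_monoid_add mpoly)"
  by (rule poly_mapping_eqI) (auto simp: lookup_sum lookup_hcomp in_keys_iff)

lemma hcomp_homogeneous_mult:
  assumes c: "homogeneous_of a (c :: 'k::comm_ring_1 mpoly)"
  shows "hcomp n (c * f) = (if a \<le> n then c * hcomp (n - a) f else 0)"
proof -
  let ?D = "mdeg ` keys f"
  have "hcomp n (c * f) = (\<Sum>k\<in>?D. hcomp n (c * hcomp k f))"
    by (subst sum_hcomp[symmetric]) (simp add: sum_distrib_left hcomp_sum)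
  also have "\<dots> = (\<Sum>k\<in>?D. if k = n - a \<and> a \<le> n then c * hcomp k f else 0)"
    by (rule sum.cong) (auto simp: hcomp_homogeneous[OF homogeneous_of_mult[OF c homogeneous_of_hcomp]])
  also have "\<dots> = (if a \<le> n then c * hcomp (n - a) f else 0)"
  proof -
    have "n - a \<notin> ?D \<Longrightarrow> hcomp (n - a) f = 0"
      by (rule poly_mapping_eqI) (auto simp: lookup_hcomp, metis image_eqI in_keys_iff)
    then show ?thesis by (auto simp: sum.delta)
  qed
  finally show ?thesis .
qed

subsection \<open>Polynomials as a vector space\<close>

definition cscale :: "'k::field \<Rightarrow> 'k mpoly \<Rightarrow> 'k mpoly" where
  "cscale c f = const_poly c * f"

lemma const_poly_add: "const_poly (a + b) = const_poly a + (const_poly b :: 'k::comm_ring_1 mpoly)"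
  by (simp add: const_poly_def single_add)

lemma const_poly_mult: "const_poly a * const_poly b = (const_poly (a * b) :: 'k::comm_ring_1 mpoly)"
  by (simp add: const_poly_def mult_single)

lemma const_poly_1: "const_poly 1 = (1 :: 'k::comm_ring_1 mpoly)"
  by (simp add: const_poly_def)

interpretation vs: vector_space "cscale :: 'k::field \<Rightarrow> 'k mpoly \<Rightarrow> 'k mpoly"
  by unfold_locales
    (simp_all add: cscale_def distrib_left distrib_right const_poly_add mult.assoc[symmetric]
      const_poly_mult const_poly_1)

text \<open>The polynomial ring is infinite-dimensional, so the library's finite-dimensional
  locales do not apply; finite dimension is therefore a property of subsets here.\<close>

definition fin_dim :: "'k::field mpoly set \<Rightarrow> bool" where
  "fin_dim W \<longleftrightarrow> (\<exists>B. finite B \<and> W \<subseteq> vs.span B)"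

lemma fin_dim_subset: "fin_dim W \<Longrightarrow> U \<subseteq> W \<Longrightarrow> fin_dim U"
  unfolding fin_dim_def by blast

lemma finite_independent_fin_dim:
  assumes "fin_dim W" "B \<subseteq> W" "vs.independent B"
  shows "finite B"
proof -
  obtain T where "finite T" "W \<subseteq> vs.span T" using assms(1) unfolding fin_dim_def by blast
  then show ?thesis using vs.independent_span_bound[of T B] assms(2,3) by blast
qed

lemma fin_dim_plus:
  assumes "fin_dim A" "fin_dim B" "W \<subseteq> {a + b | a b. a \<in> A \<and> b \<in> B}"
  shows "fin_dim W"
proof -
  obtain SA SB where S: "finite SA" "A \<subseteq> vs.span SA" "finite SB" "B \<subseteq> vs.span SB"
    using assms unfolding fin_dim_def by blast
  have A: "A \<subseteq> vs.span (SA \<union> SB)" and B: "B \<subseteq> vs.span (SA \<union> SB)"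
    using S vs.span_mono[of SA "SA \<union> SB"] vs.span_mono[of SB "SA \<union> SB"] by auto
  have "W \<subseteq> vs.span (SA \<union> SB)"
  proof
    fix x assume "x \<in> W"
    then obtain a b where "x = a + b" "a \<in> A" "b \<in> B" using assms(3) by blast
    then show "x \<in> vs.span (SA \<union> SB)" using A B vs.span_add by blast
  qed
  then show ?thesis unfolding fin_dim_def using S by blast
qed

lemma dim_le_fin_dim: "fin_dim W \<Longrightarrow> U \<subseteq> W \<Longrightarrow> vs.dim U \<le> vs.dim W"
proof -
  assume "fin_dim W" "U \<subseteq> W"
  obtain B where B: "B \<subseteq> W" "vs.independent B" "W \<subseteq> vs.span B" "card B = vs.dim W"
    using vs.basis_exists by blast
  have "finite B" using finite_independent_fin_dim[OF \<open>fin_dim W\<close> B(1,2)] .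
  then show ?thesis using vs.dim_le_card[of U B] B \<open>U \<subseteq> W\<close> by auto
qed

lemma module_hom_cscaleI:
  assumes "\<And>x y. f (x + y) = f x + f y" "\<And>c x. f (cscale c x) = cscale c (f x)"
  shows "module_hom (cscale :: 'k::field \<Rightarrow> 'k mpoly \<Rightarrow> 'k mpoly) cscale f"
  unfolding module_hom_iff using assms vs.module_axioms by blast

lemma module_hom_mult_left: "module_hom (cscale :: 'k::field \<Rightarrow> 'k mpoly \<Rightarrow> 'k mpoly) cscale (\<lambda>f. g * f)"
  by (rule module_hom_cscaleI) (simp_all add: cscale_def algebra_simps)

lemma module_hom_subst_zero: "module_hom (cscale :: 'k::field \<Rightarrow> 'k mpoly \<Rightarrow> 'k mpoly) cscale (subst_zero v)"
  by (rule module_hom_cscaleI) (simp_all add: cscale_def subst_zero_add subst_zero_const_mult)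

lemma fin_dim_image:
  assumes "module_hom (cscale :: 'k::field \<Rightarrow> 'k mpoly \<Rightarrow> 'k mpoly) cscale f" "fin_dim W"
  shows "fin_dim (f ` W)"
proof -
  interpret h: module_hom cscale cscale f by fact
  obtain B where "finite B" "W \<subseteq> vs.span B" using assms(2) unfolding fin_dim_def by blast
  then show ?thesis unfolding fin_dim_def by (metis finite_imageI h.spans_image)
qed

lemma span_Int_span_diff:
  assumes "vs.independent (B :: 'k::field mpoly set)" "finite B" "A \<subseteq> B"
  shows "vs.span A \<inter> vs.span (B - A) = {0}"
proof -
  have "x = 0" if x: "x \<in> vs.span A" "x \<in> vs.span (B - A)" for x
  proof -
    have fin: "finite A" "finite (B - A)" using assms finite_subset by auto
    obtain u where u: "x = (\<Sum>b\<in>A. cscale (u b) b)" using x(1) vs.span_finite[OF fin(1)] by blast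
    obtain w where w: "x = (\<Sum>b\<in>B - A. cscale (w b) b)" using x(2) vs.span_finite[OF fin(2)] by blast
    define c where "c b = (if b \<in> A then u b else - w b)" for b
    have "(\<Sum>b\<in>B. cscale (c b) b) = (\<Sum>b\<in>A. cscale (c b) b) + (\<Sum>b\<in>B - A. cscale (c b) b)"
      using sum.subset_diff[OF assms(3,2), of "\<lambda>b. cscale (c b) b"] by (simp add: add.commute)
    also have "(\<Sum>b\<in>A. cscale (c b) b) = x" using u by (simp add: c_def)
    also have "(\<Sum>b\<in>B - A. cscale (c b) b) = - x"
      using w by (simp add: c_def sum_negf[symmetric] vs.scale_minus_left)
    finally have "(\<Sum>b\<in>B. cscale (c b) b) = 0" by simp
    then have "\<forall>b\<in>B. c b = 0" using vs.independentD[OF assms(1,2) order_refl] by blast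
    then have "\<forall>b\<in>A. u b = 0" using assms(3) unfolding c_def by (metis subsetD)
    then show ?thesis using u by simp
  qed
  then show ?thesis by (auto intro: vs.span_zero)
qed

lemma rank_nullity:
  assumes hom: "module_hom (cscale :: 'k::field \<Rightarrow> 'k mpoly \<Rightarrow> 'k mpoly) cscale f"
    and W: "vs.subspace W" and fin: "fin_dim W"
  shows "vs.dim W = vs.dim (f ` W) + vs.dim {w \<in> W. f w = 0}"
proof -
  interpret h: module_hom cscale cscale f by fact
  define K where "K = {w \<in> W. f w = 0}"
  have K: "vs.subspace K" unfolding K_def
    using W by (auto simp: vs.subspace_def h.add h.scale)
  obtain BK where BK: "BK \<subseteq> K" "vs.independent BK" "K \<subseteq> vs.span BK" "card BK = vs.dim K"
    using vs.basis_exists by blast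
  have "BK \<subseteq> W" using BK(1) K_def by auto
  then obtain B where B: "BK \<subseteq> B" "B \<subseteq> W" "vs.independent B" "W \<subseteq> vs.span B"
    using vs.maximal_independent_subset_extend[OF _ BK(2)] by metis
  have finB: "finite B" using finite_independent_fin_dim[OF fin B(2,3)] .
  have cardB: "card B = vs.dim W" using vs.basis_card_eq_dim[OF B(2,4,3)] .
  have spanB: "vs.span B = W" using B W vs.span_subspace by blast
  define C where "C = B - BK"
  have inj: "inj_on f (vs.span C)"
  proof -
    have "vs.span C \<subseteq> W" using spanB C_def by (metis Diff_subset vs.span_mono)
    then have "x = 0" if "x \<in> vs.span C" "f x = 0" for x
      using that BK(3) span_Int_span_diff[OF B(3) finB B(1)] K_def C_def by auto
    then show ?thesis using h.inj_on_iff_eq_0[OF vs.subspace_span] by blast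
  qed
  have fW: "f ` W = vs.span (f ` C)"
  proof -
    have "f ` B \<subseteq> insert 0 (f ` C)" using BK(1) K_def C_def by auto
    then have "vs.span (f ` B) \<subseteq> vs.span (f ` C)"
      by (metis vs.span_insert_0 vs.span_mono vs.span_span)
    moreover have "vs.span (f ` C) \<subseteq> vs.span (f ` B)" by (intro vs.span_mono) (auto simp: C_def)
    ultimately show ?thesis using spanB h.span_image by blast
  qed
  have "vs.independent (f ` C)"
    using h.independent_injective_image[OF vs.independent_mono[OF B(3)] inj] C_def by blast
  then have "vs.dim (f ` W) = card (f ` C)" using fW vs.dim_span_eq_card_independent by metis
  also have "\<dots> = card C" using inj by (meson card_image inj_on_subset vs.span_superset)
  also have "\<dots> = card B - card BK" unfolding C_def using finB B(1)
    by (meson card_Diff_subset finite_subset)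
  finally have "vs.dim (f ` W) = vs.dim W - vs.dim K" using cardB BK(4) by simp
  moreover have "vs.dim K \<le> vs.dim W" using BK(4) cardB B(1) finB card_mono by metis
  ultimately show ?thesis unfolding K_def by simp
qed

lemma dim_image_inj:
  assumes hom: "module_hom (cscale :: 'k::field \<Rightarrow> 'k mpoly \<Rightarrow> 'k mpoly) cscale f"
    and W: "vs.subspace W" and fin: "fin_dim W" and inj: "\<And>w. w \<in> W \<Longrightarrow> f w = 0 \<Longrightarrow> w = 0"
  shows "vs.dim (f ` W) = vs.dim W"
proof -
  have "{w \<in> W. f w = 0} \<subseteq> {0}" using inj by auto
  then have "{w \<in> W. f w = 0} \<subseteq> vs.span {}" by (simp add: vs.span_empty)
  then have "vs.dim {w \<in> W. f w = 0} = 0" using vs.dim_le_card[of _ "{}"] by simp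
  then show ?thesis using rank_nullity[OF hom W fin] by simp
qed

lemma dim_mult_image:
  assumes "c \<noteq> 0" "vs.subspace W" "fin_dim W"
  shows "vs.dim ((\<lambda>f. c * f) ` W) = vs.dim (W :: 'k::field mpoly set)"
  by (rule dim_image_inj[OF module_hom_mult_left assms(2,3)]) (use assms(1) in simp)

lemma forms_subspace: "vs.subspace (forms V n :: 'k::field mpoly set)"
  unfolding vs.subspace_def cscale_def by (auto intro: forms_add forms_const_mult)

lemma ideal_subspace: "is_ideal_in V I \<Longrightarrow> vs.subspace (I :: 'k::field mpoly set)"
  unfolding vs.subspace_def is_ideal_in_def cscale_def using const_poly_in_polys by blast

lemma polys_subspace: "vs.subspace (polys V :: 'k::field mpoly set)"
  unfolding vs.subspace_def cscale_def by (auto intro: polys_add polys_mult const_poly_in_polys)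

subsection \<open>Dimensions of spaces of forms\<close>

lemma forms_0_eq_span_1: "forms V 0 = vs.span {1 :: 'k::field mpoly}"
proof -
  have "f \<in> range (\<lambda>c. cscale c 1)" if "f \<in> forms V 0" for f :: "'k mpoly"
  proof -
    have "\<forall>m. lookup f m \<noteq> 0 \<longrightarrow> m = 0"
      using that unfolding forms_iff_supp_within supp_within_def by (auto simp: mdeg_eq_0_iff)
    then have "f = cscale (lookup f 0) 1"
      by (intro poly_mapping_eqI) (auto simp: cscale_def const_poly_def lookup_single when_def)
    then show ?thesis by blast
  qed
  moreover have "range (\<lambda>c. cscale c (1 :: 'k mpoly)) \<subseteq> forms V 0"
    using const_poly_in_forms_0 by (auto simp: cscale_def)
  ultimately show ?thesis by (auto simp: vs.span_singleton)
qed

lemma forms_empty_Suc: "forms {} (Suc n) = {0 :: 'k::comm_ring_1 mpoly}"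
proof -
  have "mon_in {} m \<Longrightarrow> m = 0" for m unfolding mon_in_def by (intro poly_mapping_eqI) simp
  then have "f = 0" if "f \<in> forms {} (Suc n)" for f :: "'k mpoly"
    using that unfolding forms_iff_supp_within supp_within_def
    by (intro poly_mapping_eqI) fastforce
  then show ?thesis by auto
qed

lemma fin_dim_forms: "fin_dim (forms V n :: 'k::field mpoly set)"
proof -
  have "finite V" by simp
  then show ?thesis
  proof (induction V arbitrary: n rule: finite_induct)
    case empty
    then show ?case
      by (cases n) (auto simp: forms_0_eq_span_1 forms_empty_Suc fin_dim_def intro: exI[of _ "{}"])
  next
    case (insert v V)
    show ?case
    proof (induction n)
      case 0
      then show ?case unfolding fin_dim_def forms_0_eq_span_1 by blast
    next
      case (Suc n)
      have "(forms (insert v V) (Suc n) :: 'k mpoly set) \<subseteq>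
          {a + b | a b. a \<in> forms V (Suc n) \<and> b \<in> (\<lambda>f. var_poly v * f) ` forms (insert v V) n}"
      proof
        fix f :: "'k mpoly" assume f: "f \<in> forms (insert v V) (Suc n)"
        have "subst_zero v f \<in> forms V (Suc n)"
          using subst_zero_in_forms[OF f, of v] insert.hyps(2) by simp
        then show "f \<in> {a + b | a b. a \<in> forms V (Suc n) \<and> b \<in> (\<lambda>f. var_poly v * f) ` forms (insert v V) n}"
          using subst_zero_var_quot_decomp[of f v] var_quot_in_forms[OF f] by blast
      qed
      then show ?case by (rule fin_dim_plus[OF insert.IH fin_dim_image[OF module_hom_mult_left Suc.IH]])
    qed
  qed
qed

lemma dim_forms_0: "vs.dim (forms V 0 :: 'k::field mpoly set) = 1"
  unfolding forms_0_eq_span_1 vs.dim_span by (simp add: vs.dim_eq_card_independent)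

lemma dim_forms_empty_Suc: "vs.dim (forms {} (Suc n) :: 'k::field mpoly set) = 0"
  unfolding forms_empty_Suc using vs.dim_le_card[of "{0}" "{}"] by (simp add: vs.span_empty)

lemma dim_forms_Suc:
  assumes "v \<in> V"
  shows "vs.dim (forms V (Suc n) :: 'k::field mpoly set) =
    vs.dim (forms (V - {v}) (Suc n) :: 'k mpoly set) + vs.dim (forms V n :: 'k mpoly set)"
proof -
  have "vs.dim (forms V (Suc n) :: 'k mpoly set) =
      vs.dim (subst_zero v ` forms V (Suc n) :: 'k mpoly set) +
      vs.dim {f \<in> forms V (Suc n) :: 'k mpoly set. subst_zero v f = 0}"
    by (rule rank_nullity[OF module_hom_subst_zero forms_subspace fin_dim_forms])
  then show ?thesis
    unfolding subst_zero_image_forms subst_zero_kernel_forms[OF assms]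
    by (simp add: dim_mult_image forms_subspace fin_dim_forms)
qed

lemma dim_forms_one_var: "vs.dim (forms {v} n :: 'k::field mpoly set) = 1"
  by (induction n) (simp_all add: dim_forms_0 dim_forms_Suc[of v "{v}"] dim_forms_empty_Suc)

lemma dim_forms_two_vars:
  assumes "v \<noteq> w"
  shows "vs.dim (forms {v, w} n :: 'k::field mpoly set) = n + 1"
proof (induction n)
  case (Suc n)
  have "{v, w} - {w} = {v}" using assms by auto
  then have "vs.dim (forms {v, w} (Suc n) :: 'k mpoly set) =
      vs.dim (forms {v} (Suc n) :: 'k mpoly set) + vs.dim (forms {v, w} n :: 'k mpoly set)"
    using dim_forms_Suc[of w "{v, w}" n, OF insertI2[OF singletonI]] by metis
  then show ?case using Suc.IH dim_forms_one_var[of v "Suc n", where 'k='k] by linarith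
qed (simp add: dim_forms_0)

lemma dim_forms_three_vars:
  assumes "distinct [u, v, w]"
  shows "2 * vs.dim (forms {u, v, w} n :: 'k::field mpoly set) = (n + 1) * (n + 2)"
proof (induction n)
  case (Suc n)
  have "{u, v, w} - {w} = {u, v}" using assms by auto
  then have "vs.dim (forms {u, v, w} (Suc n) :: 'k mpoly set) =
      vs.dim (forms {u, v} (Suc n) :: 'k mpoly set) + vs.dim (forms {u, v, w} n :: 'k mpoly set)"
    using dim_forms_Suc[of w "{u, v, w}" n, OF insertI2[OF insertI2[OF singletonI]]] by metis
  also have "vs.dim (forms {u, v} (Suc n) :: 'k mpoly set) = n + 2"
    using assms by (simp add: dim_forms_two_vars)
  finally show ?case using Suc.IH by (simp add: algebra_simps)
qed (simp add: dim_forms_0)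

lemma dim_forms_S_vars:
  "2 * int (vs.dim (forms S_vars k :: 'k::field mpoly set)) = (int k + 1) * (int k + 2)"
proof -
  have "2 * vs.dim (forms S_vars k :: 'k mpoly set) = (k + 1) * (k + 2)"
    by (rule dim_forms_three_vars) simp
  then have "int (2 * vs.dim (forms S_vars k :: 'k mpoly set)) = int ((k + 1) * (k + 2))"
    by (rule arg_cong)
  then show ?thesis by (simp add: algebra_simps)
qed

lemma dim_forms_UNIV_Suc:
  "vs.dim (forms UNIV (Suc n) :: 'k::field mpoly set) =
    vs.dim (forms S_vars (Suc n) :: 'k mpoly set) + vs.dim (forms UNIV n :: 'k mpoly set)"
  using dim_forms_Suc[of VX UNIV n] UNIV_minus_VX by simp

subsection \<open>Hilbert functions and graded pieces of ideals\<close>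

definition spans_mod :: "'k::field mpoly set \<Rightarrow> 'k mpoly set \<Rightarrow> 'k mpoly set \<Rightarrow> bool" where
  "spans_mod W I B \<longleftrightarrow> B \<subseteq> W \<and> (\<forall>f\<in>W. \<exists>c. f - (\<Sum>b\<in>B. const_poly (c b) * b) \<in> I)"

lemma spans_mod_exists:
  assumes W: "vs.subspace W" and fin: "fin_dim W" and WI: "vs.subspace (W \<inter> I)"
  shows "\<exists>B. finite B \<and> card B = vs.dim W - vs.dim (W \<inter> I) \<and> spans_mod W I B"
proof -
  obtain BI where BI: "BI \<subseteq> W \<inter> I" "vs.independent BI" "W \<inter> I \<subseteq> vs.span BI" "card BI = vs.dim (W \<inter> I)"
    using vs.basis_exists by blast
  have "BI \<subseteq> W" using BI(1) by blast
  then obtain B where B: "BI \<subseteq> B" "B \<subseteq> W" "vs.independent B" "W \<subseteq> vs.span B"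
    using vs.maximal_independent_subset_extend[OF _ BI(2)] by metis
  have finB: "finite B" using finite_independent_fin_dim[OF fin B(2,3)] .
  have finBI: "finite BI" using finB B(1) finite_subset by blast
  have spanBI: "vs.span BI = W \<inter> I" using BI WI vs.span_subspace by blast
  define C where "C = B - BI"
  have "card C = vs.dim W - vs.dim (W \<inter> I)"
    unfolding C_def using card_Diff_subset[OF finBI B(1)] vs.basis_card_eq_dim[OF B(2,4,3)] BI(4)
    by simp
  moreover have "f - (\<Sum>b\<in>C. const_poly (u b) * b) \<in> I"
    if u: "f = (\<Sum>b\<in>B. cscale (u b) b)" for f u
  proof -
    have "f - (\<Sum>b\<in>C. cscale (u b) b) = (\<Sum>b\<in>BI. cscale (u b) b)"
      unfolding u C_def using sum.subset_diff[OF B(1) finB, of "\<lambda>b. cscale (u b) b"] by simp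
    also have "\<dots> \<in> I" using spanBI vs.span_finite[OF finBI] by blast
    finally show ?thesis by (simp add: cscale_def)
  qed
  then have "spans_mod W I C"
    unfolding spans_mod_def C_def using B(2,4) vs.span_finite[OF finB] by blast
  ultimately show ?thesis using finB C_def by blast
qed

lemma card_ge_spans_mod:
  assumes W: "vs.subspace W" and fin: "fin_dim W" and B: "finite B" "spans_mod W I B"
  shows "vs.dim W - vs.dim (W \<inter> I) \<le> card B"
proof -
  obtain BI where BI: "BI \<subseteq> W \<inter> I" "vs.independent BI" "W \<inter> I \<subseteq> vs.span BI" "card BI = vs.dim (W \<inter> I)"
    using vs.basis_exists by blast
  have finBI: "finite BI" using finite_independent_fin_dim[OF fin _ BI(2)] BI(1) by blast
  have "W \<subseteq> vs.span (B \<union> BI)"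
  proof
    fix f assume f: "f \<in> W"
    then obtain c where c: "f - (\<Sum>b\<in>B. cscale (c b) b) \<in> I"
      using B(2) unfolding spans_mod_def cscale_def by blast
    have sum_span: "(\<Sum>b\<in>B. cscale (c b) b) \<in> vs.span (B \<union> BI)"
      by (intro vs.span_sum vs.span_scale vs.span_base) simp
    have "(\<Sum>b\<in>B. cscale (c b) b) \<in> W"
      using B(2) unfolding spans_mod_def by (intro vs.subspace_sum[OF W] vs.subspace_scale[OF W]) auto
    then have "f - (\<Sum>b\<in>B. cscale (c b) b) \<in> vs.span BI"
      using f c BI(3) vs.subspace_diff[OF W] by blast
    then have "f - (\<Sum>b\<in>B. cscale (c b) b) \<in> vs.span (B \<union> BI)"
      using vs.span_mono[of BI "B \<union> BI"] by blast
    then show "f \<in> vs.span (B \<union> BI)" using sum_span vs.span_add by fastforce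
  qed
  then have "vs.dim W \<le> card (B \<union> BI)" using vs.dim_le_card B(1) finBI by blast
  also have "\<dots> \<le> card B + card BI" by (rule card_Un_le)
  finally show ?thesis using BI(4) by simp
qed

lemma hilbert_fun_least_eq:
  assumes W: "vs.subspace W" and fin: "fin_dim W" and WI: "vs.subspace (W \<inter> I)"
  shows "(LEAST k. \<exists>B. finite B \<and> card B = k \<and> B \<subseteq> W \<and>
      (\<forall>f\<in>W. \<exists>c. f - (\<Sum>b\<in>B. const_poly (c b) * b) \<in> I)) =
    vs.dim W - vs.dim (W \<inter> (I :: 'k::field mpoly set))"
  unfolding spans_mod_def[symmetric]
  using spans_mod_exists[OF assms] card_ge_spans_mod[OF W fin]
  by (intro Least_equality) auto

lemma hilbert_fun_eq_dim_diff:
  assumes "is_ideal_in V (I :: 'k::field mpoly set)"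
  shows "int (hilbert_fun V I n) = int (vs.dim (forms V n :: 'k mpoly set)) - int (vs.dim (forms V n \<inter> I))"
proof -
  have "hilbert_fun V I n = vs.dim (forms V n :: 'k mpoly set) - vs.dim (forms V n \<inter> I)"
    unfolding hilbert_fun_def
    by (rule hilbert_fun_least_eq[OF forms_subspace fin_dim_forms
          vs.subspace_inter[OF forms_subspace ideal_subspace[OF assms]]])
  moreover have "vs.dim (forms V n \<inter> I) \<le> vs.dim (forms V n :: 'k mpoly set)"
    by (rule dim_le_fin_dim[OF fin_dim_forms]) auto
  ultimately show ?thesis by simp
qed

lemma ideal_colon_var:
  assumes I: "is_ideal_in UNIV I"
  shows "is_ideal_in UNIV {f. var_poly v * f \<in> (I :: 'k::comm_ring_1 mpoly set)}"
proof -
  have "var_poly v * (a + b) \<in> I" if "var_poly v * a \<in> I" "var_poly v * b \<in> I" for a b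
    using ideal_add[OF I that] by (simp add: distrib_left)
  moreover have "var_poly v * (r * a) \<in> I" if "var_poly v * a \<in> I" for a r
    using ideal_mult[OF I that, of r] by (simp add: mult.left_commute)
  ultimately show ?thesis using ideal_zero[OF I] by (simp add: is_ideal_in_def)
qed

lemma dim_forms_Int_Suc:
  fixes I :: "'k::field mpoly set"
  assumes I: "is_ideal_in UNIV I"
  shows "vs.dim (forms UNIV (Suc n) \<inter> I) =
    vs.dim (subst_zero v ` (forms UNIV (Suc n) \<inter> I)) + vs.dim (forms UNIV n \<inter> {f. var_poly v * f \<in> I})"
proof -
  have quot: "vs.subspace {f. var_poly v * f \<in> I}"
    by (rule ideal_subspace[OF ideal_colon_var[OF I]])
  have "{j \<in> forms UNIV (Suc n) \<inter> I. subst_zero v j = 0} =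
      {j \<in> forms UNIV (Suc n). subst_zero v j = 0} \<inter> I" by auto
  also have "\<dots> = (\<lambda>f. var_poly v * f) ` forms UNIV n \<inter> I"
    by (simp add: subst_zero_kernel_forms)
  also have "\<dots> = (\<lambda>f. var_poly v * f) ` (forms UNIV n \<inter> {f. var_poly v * f \<in> I})" by auto
  finally have "{j \<in> forms UNIV (Suc n) \<inter> I. subst_zero v j = 0} =
      (\<lambda>f. var_poly v * f) ` (forms UNIV n \<inter> {f. var_poly v * f \<in> I})" .
  moreover have "vs.dim (forms UNIV (Suc n) \<inter> I) =
      vs.dim (subst_zero v ` (forms UNIV (Suc n) \<inter> I)) +
      vs.dim {j \<in> forms UNIV (Suc n) \<inter> I. subst_zero v j = 0}"
    by (rule rank_nullity[OF module_hom_subst_zero vs.subspace_inter[OF forms_subspace ideal_subspace[OF I]]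
          fin_dim_subset[OF fin_dim_forms Int_lower1]])
  ultimately show ?thesis
    using dim_mult_image[OF var_poly_nonzero vs.subspace_inter[OF forms_subspace quot]
        fin_dim_subset[OF fin_dim_forms Int_lower1]] by simp
qed

lemma forms_Int_multiples:
  fixes c :: "'k::idom mpoly"
  assumes c: "c \<in> forms V a" "c \<noteq> 0" and I: "I \<subseteq> polys V" and k: "a \<le> k"
  shows "forms V k \<inter> {c * f | f. f \<in> I} = (\<lambda>f. c * f) ` (forms V (k - a) \<inter> I)"
proof
  show "forms V k \<inter> {c * f | f. f \<in> I} \<subseteq> (\<lambda>f. c * f) ` (forms V (k - a) \<inter> I)"
  proof
    fix g assume g: "g \<in> forms V k \<inter> {c * f | f. f \<in> I}"
    then obtain f where f: "g = c * f" "f \<in> I" by blast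
    have "c * f = hcomp k (c * f)" using g f hcomp_homogeneous[of k g k] by (simp add: forms_def)
    also have "\<dots> = c * hcomp (k - a) f"
      using hcomp_homogeneous_mult[of a c k f] c(1) k by (simp add: forms_def)
    finally have "f = hcomp (k - a) f" using c(2) by simp
    then have "f \<in> forms V (k - a)" using hcomp_in_forms[of f V "k - a"] f(2) I by auto
    then show "g \<in> (\<lambda>f. c * f) ` (forms V (k - a) \<inter> I)" using f by blast
  qed
  show "(\<lambda>f. c * f) ` (forms V (k - a) \<inter> I) \<subseteq> forms V k \<inter> {c * f | f. f \<in> I}"
    using forms_mult[OF c(1), of _ "k - a"] k by auto
qed

lemma dim_forms_Int_multiples:
  fixes c :: "'k::field mpoly"
  assumes "c \<in> forms V a" "c \<noteq> 0" "vs.subspace I" "I \<subseteq> polys V" "a \<le> k"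
  shows "vs.dim (forms V k \<inter> {c * f | f. f \<in> I}) = vs.dim (forms V (k - a) \<inter> I)"
  unfolding forms_Int_multiples[OF assms(1,2,4,5)]
  by (rule dim_mult_image[OF assms(2) vs.subspace_inter[OF forms_subspace assms(3)]
        fin_dim_subset[OF fin_dim_forms Int_lower1]])

subsection \<open>Coprimality of powers of distinct variables\<close>

lemma var_power_dvd_of_mult_eq:
  fixes g g' :: "'k::idom mpoly"
  assumes "v \<noteq> w" "var_poly w ^ j * g = var_poly v ^ k * g'"
  shows "var_poly v ^ k dvd g"
  using assms(2)
proof (induction k arbitrary: g g')
  case (Suc k)
  let ?Y = "var_poly v :: 'k mpoly" and ?Z = "var_poly w :: 'k mpoly"
  have "?Z ^ j * subst_zero v g = subst_zero v (?Z ^ j * g)"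
    using assms(1) by (simp add: subst_zero_var_power_mult)
  also have "\<dots> = 0" using Suc.prems by (simp add: mult.assoc)
  finally have "subst_zero v g = 0" by simp
  then have g: "g = ?Y * var_quot v g" using subst_zero_var_quot_decomp[of g v] by simp
  then have "?Y * (?Z ^ j * var_quot v g) = ?Y * (?Y ^ k * g')"
    using Suc.prems by (metis mult.assoc mult.left_commute power_Suc)
  then have "?Y ^ k dvd var_quot v g" using Suc.IH by simp
  then show ?case by (subst g) (simp add: mult_dvd_mono)
qed simp

lemma dvd_cancel_var_powers:
  fixes c g :: "'k::idom mpoly"
  assumes vw: "v \<noteq> w" and c: "c \<noteq> 0"
    and dvd: "c dvd var_poly v ^ k * g" "c dvd var_poly w ^ k * g"
  shows "c dvd g"
proof -
  let ?Y = "var_poly v :: 'k mpoly" and ?Z = "var_poly w :: 'k mpoly"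
  obtain b1 b2 where b1: "?Y ^ k * g = c * b1" and b2: "?Z ^ k * g = c * b2"
    using dvd unfolding dvd_def by blast
  have "c * (?Z ^ k * b1) = ?Z ^ k * (?Y ^ k * g)" by (simp add: b1 mult.left_commute)
  also have "\<dots> = ?Y ^ k * (?Z ^ k * g)" by (rule mult.left_commute)
  also have "\<dots> = c * (?Y ^ k * b2)" by (simp add: b2 mult.left_commute)
  finally have "c * (?Z ^ k * b1) = c * (?Y ^ k * b2)" .
  then have "?Z ^ k * b1 = ?Y ^ k * b2" using c by simp
  then obtain r where "b1 = ?Y ^ k * r" using var_power_dvd_of_mult_eq[OF vw] by (metis dvdE)
  then have "?Y ^ k * g = ?Y ^ k * (c * r)" using b1 by (simp add: mult.left_commute)
  then show ?thesis by simp
qed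

lemma two_mult_choose_two: "2 * (n choose 2) = n * (n - 1)"
proof (induction n)
  case (Suc n)
  have "Suc n choose 2 = n + (n choose 2)"
    by (metis Suc_1 binomial_Suc_Suc choose_one)
  then show ?case using Suc by (cases n) (auto simp: algebra_simps)
qed simp

lemma two_mult_choose_two_int: "1 \<le> k \<Longrightarrow> 2 * int ((k - 1) choose 2) = (int k - 1) * (int k - 2)"
  using arg_cong[OF two_mult_choose_two[of "k - 1"], of int] by (cases "k = 1") (auto simp: of_nat_diff)

text \<open>With s k = dim S_k = (k+1)(k+2)/2, the next identity reads
  s n - s (n - a) + e + s (n - 1) - s (n - 1 - \<delta>) = (a + \<delta>) n + 1 - p_a.\<close>

lemma hilbert_polynomial_identity:
  fixes n a \<delta> e s0 s1 s2 s3 c1 c2 :: int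
  assumes "2 * s0 = (n + 1) * (n + 2)" "2 * s1 = (n - 1 + 1) * (n - 1 + 2)"
    "2 * s2 = (n - a + 1) * (n - a + 2)" "2 * s3 = (n - 1 - \<delta> + 1) * (n - 1 - \<delta> + 2)"
    "2 * c1 = (a - 1) * (a - 2)" "2 * c2 = (\<delta> - 1) * (\<delta> - 2)"
  shows "s0 - s2 + e + s1 - s3 = (a + \<delta>) * n + 1 - (c1 + c2 + \<delta> - e - 1)"
proof -
  have "2 * (s0 - s2 + e + s1 - s3) = 2 * ((a + \<delta>) * n + 1 - (c1 + c2 + \<delta> - e - 1))"
    using assms by algebra
  then show ?thesis by simp
qed

subsection \<open>The residual sequence\<close>

locale expected_residual =
  fixes IZ J :: "'k::field mpoly set" and p h :: "'k mpoly" and \<delta> dh :: nat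
  assumes IZ_ideal: "is_ideal_in S_vars IZ"
    and p_S: "p \<in> polys S_vars" and h_S: "h \<in> polys S_vars"
    and p_nz: "p \<noteq> 0" and h_nz: "h \<noteq> 0"
    and p_hom: "homogeneous_of \<delta> p" and h_hom: "homogeneous_of dh h"
    and J_hom: "homogeneous_ideal_in UNIV J"
    and J_res: "{g \<in> polys S_vars. \<exists>j\<in>J. \<exists>r. j = g + var_poly VX * r} = {p * h * f | f. f \<in> IZ}"
    and J_col: "{f. var_poly VX * f \<in> J} = {var_poly VX * a + p * b | a b. True}"
begin

definition ph_IZ :: "'k mpoly set" where
  "ph_IZ = {p * h * f | f. f \<in> IZ}"

definition xp_ideal :: "'k mpoly set" where
  "xp_ideal = {var_poly VX * a + p * b | a b. True}"

lemma J_ideal: "is_ideal_in UNIV J"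
  using J_hom unfolding homogeneous_ideal_in_def by blast

lemma IZ_subset_polys: "IZ \<subseteq> polys S_vars"
  using IZ_ideal unfolding is_ideal_in_def by blast

lemma p_forms: "p \<in> forms S_vars \<delta>"
  using p_S p_hom unfolding forms_def by simp

lemma ph_forms: "p * h \<in> forms S_vars (\<delta> + dh)"
  by (rule forms_mult[OF p_forms]) (simp add: forms_def h_S h_hom)

lemma subst_zero_S_vars: "f \<in> polys S_vars \<Longrightarrow> subst_zero VX f = f"
  by (rule subst_zero_polys) auto

lemma subst_zero_in_polys_S_vars: "subst_zero VX f \<in> polys S_vars"
  using subst_zero_in_polys[of VX f] UNIV_minus_VX by simp

lemma subst_zero_J: "j \<in> J \<Longrightarrow> subst_zero VX j \<in> ph_IZ"
  using J_res subst_zero_in_polys_S_vars subst_zero_var_quot_decomp[of j VX]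
  unfolding ph_IZ_def by blast

lemma mem_xp_ideal_iff: "f \<in> xp_ideal \<longleftrightarrow> p dvd subst_zero VX f"
proof
  assume "f \<in> xp_ideal"
  then obtain a b where "f = var_poly VX * a + p * b" unfolding xp_ideal_def by blast
  then have "subst_zero VX f = p * subst_zero VX b"
    by (simp add: subst_zero_add subst_zero_mult subst_zero_S_vars[OF p_S])
  then show "p dvd subst_zero VX f" by simp
next
  assume "p dvd subst_zero VX f"
  then obtain b where "subst_zero VX f = p * b" unfolding dvd_def by blast
  then have "f = var_poly VX * var_quot VX f + p * b"
    using subst_zero_var_quot_decomp[of f VX] by (simp add: add.commute)
  then show "f \<in> xp_ideal" unfolding xp_ideal_def by blast
qed

lemma xp_ideal_is_ideal: "is_ideal_in UNIV xp_ideal"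
  by (auto simp: is_ideal_in_def mem_xp_ideal_iff subst_zero_add subst_zero_mult)

lemma subst_zero_image_forms_J: "subst_zero VX ` (forms UNIV n \<inter> J) = forms S_vars n \<inter> ph_IZ"
proof
  show "subst_zero VX ` (forms UNIV n \<inter> J) \<subseteq> forms S_vars n \<inter> ph_IZ"
    using subst_zero_in_forms[of _ UNIV n VX] UNIV_minus_VX subst_zero_J by auto
  show "forms S_vars n \<inter> ph_IZ \<subseteq> subst_zero VX ` (forms UNIV n \<inter> J)"
  proof
    fix g assume g: "g \<in> forms S_vars n \<inter> ph_IZ"
    then obtain j r where j: "j \<in> J" "j = g + var_poly VX * r"
      using J_res unfolding ph_IZ_def forms_def by blast
    have "subst_zero VX j = g" using j(2) g by (simp add: subst_zero_add subst_zero_S_vars forms_def)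
    then have "subst_zero VX (hcomp n j) = hcomp n g" by (simp flip: hcomp_subst_zero)
    also have "hcomp n g = g" using g hcomp_homogeneous[of n g n] by (simp add: forms_def)
    finally have "subst_zero VX (hcomp n j) = g" .
    moreover have "hcomp n j \<in> forms UNIV n \<inter> J"
      using hcomp_in_forms[of j UNIV n] J_hom j(1) unfolding homogeneous_ideal_in_def by simp
    ultimately show "g \<in> subst_zero VX ` (forms UNIV n \<inter> J)" by (metis image_eqI)
  qed
qed

lemma subst_zero_image_forms_xp_ideal:
  "subst_zero VX ` (forms UNIV n \<inter> xp_ideal) = forms S_vars n \<inter> {p * b | b. b \<in> polys S_vars}"
proof
  show "subst_zero VX ` (forms UNIV n \<inter> xp_ideal) \<subseteq> forms S_vars n \<inter> {p * b | b. b \<in> polys S_vars}"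
  proof
    fix g assume "g \<in> subst_zero VX ` (forms UNIV n \<inter> xp_ideal)"
    then obtain q where q: "q \<in> forms UNIV n" "g = subst_zero VX q" "q \<in> xp_ideal" by blast
    then obtain b where "subst_zero VX q = p * b" unfolding mem_xp_ideal_iff dvd_def by blast
    then have "g = p * subst_zero VX b"
      using q(2) subst_zero_subst_zero[of VX q] p_nz
      by (simp add: subst_zero_mult subst_zero_S_vars[OF p_S])
    moreover have "g \<in> forms S_vars n" using subst_zero_in_forms[OF q(1), of VX] q(2) UNIV_minus_VX by simp
    ultimately show "g \<in> forms S_vars n \<inter> {p * b | b. b \<in> polys S_vars}"
      using subst_zero_in_polys_S_vars by blast
  qed
  show "forms S_vars n \<inter> {p * b | b. b \<in> polys S_vars} \<subseteq> subst_zero VX ` (forms UNIV n \<inter> xp_ideal)"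
  proof
    fix g assume g: "g \<in> forms S_vars n \<inter> {p * b | b. b \<in> polys S_vars}"
    then have "subst_zero VX g = g" by (simp add: subst_zero_S_vars forms_def)
    moreover have "g \<in> xp_ideal" using g \<open>subst_zero VX g = g\<close> unfolding mem_xp_ideal_iff by auto
    moreover have "g \<in> forms UNIV n" using g forms_mono[of S_vars UNIV] by blast
    ultimately show "g \<in> subst_zero VX ` (forms UNIV n \<inter> xp_ideal)" by (metis IntI image_eqI)
  qed
qed

lemma dim_J_forms_Suc:
  "vs.dim (forms UNIV (Suc n) \<inter> J) =
    vs.dim (forms S_vars (Suc n) \<inter> ph_IZ) + vs.dim (forms UNIV n \<inter> xp_ideal)"
  using dim_forms_Int_Suc[OF J_ideal, of n VX] J_col
  unfolding subst_zero_image_forms_J xp_ideal_def by simp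

lemma dim_xp_ideal_forms_Suc:
  "vs.dim (forms UNIV (Suc n) \<inter> xp_ideal) =
    vs.dim (forms S_vars (Suc n) \<inter> {p * b | b. b \<in> polys S_vars}) + vs.dim (forms UNIV n :: 'k mpoly set)"
proof -
  have "{f. var_poly VX * f \<in> xp_ideal} = UNIV"
    by (auto simp: mem_xp_ideal_iff)
  then show ?thesis
    using dim_forms_Int_Suc[OF xp_ideal_is_ideal, of n VX]
    unfolding subst_zero_image_forms_xp_ideal by simp
qed

lemma dim_forms_p_multiples:
  assumes "\<delta> \<le> k"
  shows "vs.dim (forms S_vars k \<inter> {p * b | b. b \<in> polys S_vars}) = vs.dim (forms S_vars (k - \<delta>) :: 'k mpoly set)"
proof -
  have "forms S_vars (k - \<delta>) \<inter> polys S_vars = (forms S_vars (k - \<delta>) :: 'k mpoly set)"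
    by (auto simp: forms_def)
  then show ?thesis
    using dim_forms_Int_multiples[OF p_forms p_nz polys_subspace order_refl assms] by simp
qed

lemma dim_forms_ph_IZ:
  assumes "\<delta> + dh \<le> k"
  shows "vs.dim (forms S_vars k \<inter> ph_IZ) = vs.dim (forms S_vars (k - (\<delta> + dh)) \<inter> IZ)"
  unfolding ph_IZ_def
  using dim_forms_Int_multiples[OF ph_forms _ ideal_subspace[OF IZ_ideal] IZ_subset_polys assms] p_nz h_nz
  by simp

lemma hilbert_fun_J_eq_dims:
  assumes "\<delta> + dh \<le> Suc (Suc m)" "\<delta> \<le> Suc m"
  shows "int (hilbert_fun UNIV J (Suc (Suc m))) =
    int (vs.dim (forms S_vars (Suc (Suc m)) :: 'k mpoly set))
    - int (vs.dim (forms S_vars (Suc (Suc m) - (\<delta> + dh)) :: 'k mpoly set))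
    + int (hilbert_fun S_vars IZ (Suc (Suc m) - (\<delta> + dh)))
    + int (vs.dim (forms S_vars (Suc m) :: 'k mpoly set))
    - int (vs.dim (forms S_vars (Suc m - \<delta>) :: 'k mpoly set))"
  using hilbert_fun_eq_dim_diff[OF J_ideal, of "Suc (Suc m)"]
    dim_forms_UNIV_Suc[of "Suc m", where 'k='k] dim_forms_UNIV_Suc[of m, where 'k='k]
    dim_J_forms_Suc[of "Suc m"] dim_xp_ideal_forms_Suc[of m]
    dim_forms_p_multiples[OF assms(2)] dim_forms_ph_IZ[OF assms(1)]
    hilbert_fun_eq_dim_diff[OF IZ_ideal, of "Suc (Suc m) - (\<delta> + dh)"]
  by linarith

lemma subst_zero_in_ph_IZ:
  assumes IZ_sat: "saturated_in S_vars IZ" and k: "\<And>v. var_poly v ^ k * f \<in> J"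
  shows "subst_zero VX f \<in> ph_IZ"
proof -
  have mult: "var_poly v ^ k * subst_zero VX f \<in> ph_IZ" if "v \<noteq> VX" for v
    using subst_zero_J[OF k[of v]] unfolding subst_zero_var_power_mult[OF that] .
  have dvd: "p * h dvd var_poly v ^ k * subst_zero VX f" if v: "v \<noteq> VX" for v
  proof -
    obtain g where "var_poly v ^ k * subst_zero VX f = p * h * g"
      using mult[OF v] unfolding ph_IZ_def by blast
    then show ?thesis by (metis dvd_triv_left)
  qed
  have "p * h dvd subst_zero VX f"
    by (rule dvd_cancel_var_powers[of VY VZ "p * h" k]) (simp_all add: dvd p_nz h_nz)
  then obtain r where "subst_zero VX f = p * h * r" unfolding dvd_def by blast
  then have r: "subst_zero VX f = p * h * subst_zero VX r"
    using subst_zero_subst_zero[of VX f] p_nz h_nz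
    by (simp add: subst_zero_mult subst_zero_S_vars[OF p_S] subst_zero_S_vars[OF h_S])
  have "var_poly v ^ k * subst_zero VX r \<in> IZ" if v: "v \<in> S_vars" for v
  proof -
    have "v \<noteq> VX" using v by auto
    then obtain g where g: "g \<in> IZ" "var_poly v ^ k * subst_zero VX f = p * h * g"
      using mult unfolding ph_IZ_def by blast
    then have "p * h * (var_poly v ^ k * subst_zero VX r) = p * h * g"
      using r by (simp add: algebra_simps)
    then show ?thesis using g(1) p_nz h_nz by simp
  qed
  then have "subst_zero VX r \<in> IZ"
    using IZ_sat subst_zero_in_polys_S_vars unfolding saturated_in_def by blast
  then show ?thesis using r unfolding ph_IZ_def by blast
qed

lemma mem_xp_ideal_of_var_powers:
  assumes "var_poly VY ^ k * w \<in> xp_ideal" "var_poly VZ ^ k * w \<in> xp_ideal"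
  shows "w \<in> xp_ideal"
  using assms dvd_cancel_var_powers[of VY VZ p k "subst_zero VX w"] p_nz
  unfolding mem_xp_ideal_iff by (simp add: subst_zero_var_power_mult)

lemma J_saturated:
  assumes IZ_sat: "saturated_in S_vars IZ"
  shows "saturated_in UNIV J"
  unfolding saturated_in_def
proof (intro ballI impI)
  fix f assume "\<exists>k. \<forall>v\<in>UNIV. var_poly v ^ k * f \<in> J"
  then obtain k where k: "\<And>v. var_poly v ^ k * f \<in> J" by blast
  have "subst_zero VX f \<in> ph_IZ" by (rule subst_zero_in_ph_IZ[OF IZ_sat k])
  then obtain j r where j: "j \<in> J" "j = subst_zero VX f + var_poly VX * r"
    using J_res subst_zero_in_polys_S_vars unfolding ph_IZ_def by blast
  define w where "w = var_quot VX f - r"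
  have f: "f = j + var_poly VX * w"
    using subst_zero_var_quot_decomp[of f VX] j(2) unfolding w_def by (simp add: algebra_simps)
  have "var_poly v ^ k * w \<in> xp_ideal" for v
  proof -
    have "var_poly v ^ k * f + - (var_poly v ^ k) * j \<in> J"
      by (rule ideal_add[OF J_ideal k ideal_mult[OF J_ideal j(1)]]) simp
    then have "var_poly VX * (var_poly v ^ k * w) \<in> J" by (simp add: f algebra_simps)
    then show ?thesis using J_col unfolding xp_ideal_def by blast
  qed
  then have "var_poly VX * w \<in> J"
    using mem_xp_ideal_of_var_powers J_col unfolding xp_ideal_def by blast
  then show "f \<in> J" using f ideal_add[OF J_ideal j(1)] by simp
qed

lemma degree_p_pos:
  assumes p_IZ: "p \<in> IZ" and IZ_deg: "\<forall>k\<ge>N. hilbert_fun S_vars IZ k = e" and e_pos: "e > 0"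
  shows "1 \<le> \<delta>"
proof (rule ccontr)
  assume "\<not> 1 \<le> \<delta>"
  then have "\<delta> = 0" by simp
  then have "p \<in> forms S_vars 0" using p_forms by simp
  then have "p \<in> vs.span {1}" unfolding forms_0_eq_span_1 .
  then obtain c where "p = const_poly c"
    by (auto simp: vs.span_singleton cscale_def)
  then have c: "c \<noteq> 0" "p = const_poly c" using p_nz by (auto simp: const_poly_def)
  have "forms S_vars k \<inter> IZ = forms S_vars k" for k
  proof -
    have "f \<in> IZ" if f: "f \<in> forms S_vars k" for f
    proof -
      have "(const_poly (inverse c) * f) * p = f"
        using c by (simp add: mult.commute mult.left_commute const_poly_mult const_poly_1)
      moreover have "(const_poly (inverse c) * f) * p \<in> IZ"
        using f by (intro ideal_mult[OF IZ_ideal p_IZ] polys_mult const_poly_in_polys) (simp add: forms_def)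
      ultimately show ?thesis by metis
    qed
    then show ?thesis by blast
  qed
  then have "hilbert_fun S_vars IZ k = 0" for k
    using hilbert_fun_eq_dim_diff[OF IZ_ideal, of k] by simp
  then show False using IZ_deg e_pos by auto
qed

lemma hilbert_fun_J_eq_poly:
  assumes \<delta>_pos: "1 \<le> \<delta>" and IZ_deg: "\<forall>k\<ge>N. hilbert_fun S_vars IZ k = e"
    and n: "N + \<delta> + dh + 2 \<le> n"
  shows "int (hilbert_fun UNIV J n) = int (2 * \<delta> + dh) * int n + 1 -
    (int ((\<delta> + dh - 1) choose 2) + int ((\<delta> - 1) choose 2) + int \<delta> - int e - 1)"
proof -
  define m where "m = n - 2"
  have n_eq: "n = Suc (Suc m)" using n unfolding m_def by simp
  have le: "\<delta> + dh \<le> Suc (Suc m)" "\<delta> \<le> Suc m" using n n_eq by auto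
  have IZ_e: "hilbert_fun S_vars IZ (Suc (Suc m) - (\<delta> + dh)) = e" using IZ_deg n n_eq by simp
  have ints: "int (Suc m) = int (Suc (Suc m)) - 1"
    "int (Suc (Suc m) - (\<delta> + dh)) = int (Suc (Suc m)) - int (\<delta> + dh)"
    "int (Suc m - \<delta>) = int (Suc (Suc m)) - 1 - int \<delta>"
    using le by auto
  have "1 \<le> \<delta> + dh" using \<delta>_pos by simp
  note identity = hilbert_polynomial_identity[OF
      dim_forms_S_vars[of "Suc (Suc m)", where 'k='k]
      dim_forms_S_vars[of "Suc m", where 'k='k, unfolded ints]
      dim_forms_S_vars[of "Suc (Suc m) - (\<delta> + dh)", where 'k='k, unfolded ints]
      dim_forms_S_vars[of "Suc m - \<delta>", where 'k='k, unfolded ints]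
      two_mult_choose_two_int[OF \<open>1 \<le> \<delta> + dh\<close>] two_mult_choose_two_int[OF \<delta>_pos]]
  have "int (hilbert_fun UNIV J n) = (int (\<delta> + dh) + int \<delta>) * int n + 1 -
      (int ((\<delta> + dh - 1) choose 2) + int ((\<delta> - 1) choose 2) + int \<delta> - int e - 1)"
    using hilbert_fun_J_eq_dims[OF le] identity[of "int e"] IZ_e unfolding n_eq by linarith
  then show ?thesis by (simp add: algebra_simps)
qed

end

theorem lemma3p2:
  fixes IZ J :: "'k::field mpoly set"
    and p h :: "'k mpoly"
    and \<delta> dh d e :: nat
  assumes "alg_closed TYPE('k)"
    \<comment> \<open>Z: nonempty zero-dimensional subscheme of H = Proj S, with saturated ideal IZ in S
        and degree e (constant Hilbert polynomial of S/IZ)\<close>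
    and IZ_hom: "homogeneous_ideal_in {VY, VZ, VT} IZ"
    and IZ_sat: "saturated_in {VY, VZ, VT} IZ"
    and IZ_deg: "\<forall>\<^sub>F n in sequentially. hilbert_fun {VY, VZ, VT} IZ n = e"
    and e_pos: "e > 0"
    \<comment> \<open>p, h nonzero homogeneous in S, deg p = \<delta>, deg h = dh, d = 2\<delta> + dh\<close>
    and p_S: "p \<in> polys {VY, VZ, VT}" and h_S: "h \<in> polys {VY, VZ, VT}"
    and p_nz: "p \<noteq> 0" and h_nz: "h \<noteq> 0"
    and p_hom: "homogeneous_of \<delta> p" and h_hom: "homogeneous_of dh h"
    and d_def: "d = 2 * \<delta> + dh"
    \<comment> \<open>Z \<subset> C' (C' \<subset> P is automatic), i.e. (x,p) \<subseteq> I_Z\<close>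
    and Z_C: "p \<in> IZ"
    \<comment> \<open>J homogeneous ideal of R with (J + xR)/xR = ph I_{Z,H} and J : (x) = (x,p)\<close>
    and J_hom: "homogeneous_ideal_in UNIV J"
    and J_res: "{g \<in> polys {VY, VZ, VT}. \<exists>j\<in>J. \<exists>r. j = g + var_poly VX * r}
                  = {p * h * f | f. f \<in> IZ}"
    and J_col: "{f. var_poly VX * f \<in> J} = {var_poly VX * a + p * b | a b. True}"
  shows "saturated_in UNIV J \<and>
         (\<forall>\<^sub>F n in sequentially. int (hilbert_fun UNIV J n) =
            int d * int n + 1 -
            (int ((d - \<delta> - 1) choose 2) + int ((\<delta> - 1) choose 2) + int \<delta> - int e - 1))"
proof -
  \<comment> \<open>The argument is linear algebra over an arbitrary field.\<close>
  interpret expected_residual IZ J p h \<delta> dh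
    using IZ_hom p_S h_S p_nz h_nz p_hom h_hom J_hom J_res J_col
    by unfold_locales (auto simp: homogeneous_ideal_in_def)
  obtain N where N: "\<forall>k\<ge>N. hilbert_fun {VY, VZ, VT} IZ k = e"
    using IZ_deg unfolding eventually_sequentially by blast
  have "1 \<le> \<delta>" by (rule degree_p_pos[OF Z_C N e_pos])
  then have "\<forall>n\<ge>N + \<delta> + dh + 2. int (hilbert_fun UNIV J n) = int d * int n + 1 -
      (int ((d - \<delta> - 1) choose 2) + int ((\<delta> - 1) choose 2) + int \<delta> - int e - 1)"
    using hilbert_fun_J_eq_poly[OF _ N] d_def by (simp add: numeral_2_eq_2)
  then show ?thesis
    using J_saturated[OF IZ_sat] unfolding eventually_sequentially by blast
qed

end
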